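(* Let $g$ be an invertible measure preserving transformation of a probability space $(X,\nu)$ with no periodic points. Let $B\subset X$ be measurable with $\nu(B)=\nu_0>0$, and let $N:B\to\{1,2,3,\dots\}$ be a measurable function such that $\tilde g(x):=g^{N(x)}(x)\in B$ for almost every $x\in B$. Assume $$\int_B N(x)\,d\nu<\infty.$$ Then there is a measurable subset $B'\subset B$ such that: (1) $\nu(B')>0$, $\tilde g(B')=B'$, and $g_*=\tilde g|_{B'}$ is invertible and $\nu$-preserving; (2) $$\int_{B'}N(x)\,d\nu\ge \nu\Big(\bigcup_{j=-\infty}^{\infty}g^j(B)\Big).$$
   Context: Such a set $B'$ is called a kernel of $\tilde g$. *)

theory Defs
  imports "HOL-Probability.Probability"
begin

definition measure_preserving :: "'a measure \<Rightarrow> 'b measure \<Rightarrow> ('a \<Rightarrow> 'b) set" where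
  "measure_preserving M M' = {f. f \<in> measurable M M' \<and>
     (\<forall>A\<in>sets M'. emeasure M (f -` A \<inter> space M) = emeasure M' A)}"

definition ipow :: "'a set \<Rightarrow> ('a \<Rightarrow> 'a) \<Rightarrow> int \<Rightarrow> 'a \<Rightarrow> 'a" where
  "ipow S g j = (if 0 \<le> j then g ^^ nat j else the_inv_into S g ^^ nat (- j))"

end

theory Submission
  imports Defs
begin

text \<open>Write \<open>T x = g\<^bsup>N x\<^esup> x\<close> for the induced map and \<open>g\<^sup>i {x \<in> A. i < N x}\<close>
  (\<open>i \<ge> 0\<close>) for the floors of the tower over \<open>A \<subseteq> B\<close>. Their measures add up to
  \<open>\<integral>\<^sub>A N\<close>, so almost every point lies on finitely many floors over \<open>B\<close>; by Poincar\<acute>e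
  recurrence for \<open>g\<^sup>-\<^sup>1\<close>, almost every point of \<open>B\<close> returns to \<open>B\<close> infinitely often
  in the past. Discard all orbits through the exceptional null set and let the core be
  \<open>\<Inter>\<^sub>k T\<^sup>k B\<close>. Finiteness of the floors (and pigeonhole) makes \<open>T\<close> map the core
  onto itself, and since the images \<open>T {N = n}\<close> of its level sets have total measure equal
  to that of the core, they overlap only in a null set; discarding the orbits through these
  overlaps gives the kernel \<open>B'\<close>, on which \<open>T\<close> is a measure preserving bijection. Finally,
  a point of the saturation \<open>\<Union>\<^sub>j g\<^sup>j B\<close> visits \<open>B\<close> infinitely often in the past, and
  descending from such visits along \<open>T\<close> one finds it on a floor over the kernel. Hence the
  saturation has measure at most \<open>\<integral>\<^sub>B\<^sub>' N\<close>.\<close>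

lemma suminf_indicator_nat:
  "(\<Sum>i. indicator C i :: ennreal) = emeasure (count_space UNIV) (C :: nat set)"
  using nn_integral_count_space_nat[of "indicator C"] by simp

lemma finite_pigeonhole_antimono:
  fixes P :: "'b \<Rightarrow> nat \<Rightarrow> bool"
  assumes "finite F" and ex: "\<And>k. \<exists>j\<in>F. P j k"
    and antimono: "\<And>j k k'. k \<le> k' \<Longrightarrow> P j k' \<Longrightarrow> P j k"
  shows "\<exists>j\<in>F. \<forall>k. P j k"
proof (rule ccontr)
  assume "\<not> ?thesis"
  then obtain kf where kf: "\<And>j. j \<in> F \<Longrightarrow> \<not> P j (kf j)" by metis
  obtain j where j: "j \<in> F" "P j (Max (kf ` F))" using ex by blast
  have "kf j \<le> Max (kf ` F)" using j \<open>finite F\<close> by simp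
  then show False using antimono j kf by blast
qed

lemma (in finite_measure) disjoint_family_equal_measure_null:
  fixes P :: "nat \<Rightarrow> 'a set"
  assumes P: "range P \<subseteq> sets M" "disjoint_family P"
    and eq: "\<And>j. measure M (P j) = measure M (P 0)"
  shows "P 0 \<in> null_sets M"
proof -
  have bound: "real n * measure M (P 0) \<le> measure M (space M)" for n
  proof -
    have "real n * measure M (P 0) = (\<Sum>j<n. measure M (P j))"
      by (simp add: sum.cong[OF refl eq])
    also have "\<dots> = measure M (\<Union>j<n. P j)"
      using P by (intro finite_measure_finite_Union[symmetric]) (auto intro: disjoint_family_on_mono)
    also have "\<dots> \<le> measure M (space M)" by (rule bounded_measure)
    finally show ?thesis .
  qed
  have "measure M (P 0) = 0"
  proof (rule ccontr)
    assume "measure M (P 0) \<noteq> 0"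
    then have "measure M (P 0) > 0" using measure_nonneg by (metis order_le_less)
    then obtain n where "measure M (space M) < real n * measure M (P 0)"
      using ex_less_of_nat_mult by blast
    then show False using bound[of n] by simp
  qed
  then show ?thesis using P by (auto simp: emeasure_eq_measure null_sets_def)
qed

lemma (in finite_measure) overlap_null_if_suminf_le:
  assumes C: "range C \<subseteq> sets M" and K: "K \<in> sets M" "K \<subseteq> (\<Union>l. C l)"
    and sum_le: "(\<Sum>l. emeasure M (C l)) \<le> emeasure M K" and "n \<noteq> m"
  shows "C n \<inter> C m \<in> null_sets M"
proof -
  let ?I = "C n \<inter> C m"
  have I: "?I \<in> sets M" using C by auto
  have pointwise: "indicator K x + indicator ?I x \<le> (\<Sum>l. indicator (C l) x :: ennreal)" for x
  proof (cases "x \<in> ?I")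
    case True
    have "(\<Sum>l\<in>{n, m}. indicator (C l) x :: ennreal) \<le> (\<Sum>l. indicator (C l) x)"
      by (rule sum_le_suminf) auto
    moreover have "(\<Sum>l\<in>{n, m}. indicator (C l) x :: ennreal) = 1 + 1"
      using True \<open>n \<noteq> m\<close> by simp
    moreover have "indicator K x + indicator ?I x \<le> (1 + 1 :: ennreal)"
      by (intro add_mono) (auto simp: indicator_def)
    ultimately show ?thesis by (metis order_trans)
  next
    case False
    show ?thesis
    proof (cases "x \<in> K")
      case True
      then obtain l where "x \<in> C l" using K by blast
      moreover have "(\<Sum>l'\<in>{l}. indicator (C l') x :: ennreal) \<le> (\<Sum>l. indicator (C l) x)"
        by (rule sum_le_suminf) auto
      ultimately show ?thesis using True False by simp
    qed (use False in simp)
  qed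
  have "emeasure M K + emeasure M ?I = (\<integral>\<^sup>+x. indicator K x + indicator ?I x \<partial>M)"
    using K I by (simp add: nn_integral_add)
  also have "\<dots> \<le> (\<integral>\<^sup>+x. (\<Sum>l. indicator (C l) x) \<partial>M)"
    by (intro nn_integral_mono pointwise)
  also have "\<dots> = (\<Sum>l. emeasure M (C l))"
    using C by (subst nn_integral_suminf) auto
  also have "\<dots> \<le> emeasure M K" by (rule sum_le)
  finally have "emeasure M K + emeasure M ?I \<le> emeasure M K" .
  then have "emeasure M ?I = 0" using emeasure_finite[of K] by (simp add: top_unique) 
  then show ?thesis using I by auto
qed

lemma measure_preserving_restrict_space:
  assumes A: "A \<in> sets M" and maps: "\<And>x. x \<in> A \<Longrightarrow> f x \<in> A"
    and vimage_sets: "\<And>C. C \<in> sets M \<Longrightarrow> C \<subseteq> A \<Longrightarrow> f -` C \<inter> A \<in> sets M"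
    and vimage_emeasure: "\<And>C. C \<in> sets M \<Longrightarrow> C \<subseteq> A \<Longrightarrow> emeasure M (f -` C \<inter> A) = emeasure M C"
  shows "f \<in> measure_preserving (restrict_space M A) (restrict_space M A)"
proof -
  have A': "A \<inter> space M \<in> sets M" using A by simp
  have space: "space (restrict_space M A) = A"
    using sets.sets_into_space[OF A] by (auto simp: space_restrict_space)
  have sets: "C \<in> sets (restrict_space M A) \<longleftrightarrow> C \<subseteq> A \<and> C \<in> sets M" for C
    using sets_restrict_space_iff[OF A'] by simp
  have "f \<in> restrict_space M A \<rightarrow>\<^sub>M restrict_space M A"
    by (rule measurableI) (use maps vimage_sets space sets in auto)
  then show ?thesis unfolding measure_preserving_def
    using vimage_emeasure sets space emeasure_restrict_space[OF A'] by auto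
qed

section \<open>Powers of an invertible measure preserving map\<close>

locale invertible_mps =
  fixes M :: "'a measure" and g :: "'a \<Rightarrow> 'a"
  assumes measure_preserving: "g \<in> measure_preserving M M"
    and bij: "bij_betw g (space M) (space M)"
    and inverse_measurable: "the_inv_into (space M) g \<in> M \<rightarrow>\<^sub>M M"
begin

definition ginv :: "'a \<Rightarrow> 'a" where "ginv = the_inv_into (space M) g"

lemma ipow_eq: "ipow (space M) g j = (if 0 \<le> j then g ^^ nat j else ginv ^^ nat (- j))"
  unfolding ipow_def ginv_def by simp

lemma g_space: "x \<in> space M \<Longrightarrow> g x \<in> space M"
  using bij by (rule bij_betw_apply)

lemma ginv_space: "x \<in> space M \<Longrightarrow> ginv x \<in> space M"
  using bij by (auto simp: ginv_def bij_betw_def intro!: the_inv_into_into)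

lemma g_ginv: "x \<in> space M \<Longrightarrow> g (ginv x) = x"
  using bij by (auto simp: ginv_def bij_betw_def intro!: f_the_inv_into_f)

lemma ginv_g: "x \<in> space M \<Longrightarrow> ginv (g x) = x"
  using bij by (auto simp: ginv_def bij_betw_def intro!: the_inv_into_f_f)

lemma funpow_g_space: "x \<in> space M \<Longrightarrow> (g ^^ n) x \<in> space M"
  by (induction n) (auto simp: g_space)

lemma funpow_ginv_space: "x \<in> space M \<Longrightarrow> (ginv ^^ n) x \<in> space M"
  by (induction n) (auto simp: ginv_space)

lemma funpow_g_ginv: "x \<in> space M \<Longrightarrow> (g ^^ n) ((ginv ^^ n) x) = x"
proof (induction n)
  case (Suc n)
  have "(g ^^ Suc n) ((ginv ^^ Suc n) x) = (g ^^ n) (g (ginv ((ginv ^^ n) x)))"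
    by (simp only: funpow_Suc_right[of _ g] funpow.simps(2)[where f = ginv] o_apply)
  then show ?case using Suc by (simp add: g_ginv funpow_ginv_space)
qed simp

lemma funpow_ginv_g: "x \<in> space M \<Longrightarrow> (ginv ^^ n) ((g ^^ n) x) = x"
proof (induction n)
  case (Suc n)
  have "(ginv ^^ Suc n) ((g ^^ Suc n) x) = (ginv ^^ n) (ginv (g ((g ^^ n) x)))"
    by (simp only: funpow_Suc_right[of _ ginv] funpow.simps(2)[where f = g] o_apply)
  then show ?case using Suc by (simp add: ginv_g funpow_g_space)
qed simp

lemma funpow_g_ginv_le:
  assumes "x \<in> space M" "i \<le> n"
  shows "(g ^^ i) ((ginv ^^ n) x) = (ginv ^^ (n - i)) x"
proof -
  have "(ginv ^^ n) x = (ginv ^^ i) ((ginv ^^ (n - i)) x)"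
    using assms(2) by (metis comp_apply funpow_add le_add_diff_inverse)
  then show ?thesis using assms(1) by (simp add: funpow_g_ginv funpow_ginv_space)
qed

lemma funpow_g_ginv_ge:
  assumes "x \<in> space M" "n \<le> i"
  shows "(g ^^ i) ((ginv ^^ n) x) = (g ^^ (i - n)) x"
proof -
  have "g ^^ i = (g ^^ (i - n)) \<circ> (g ^^ n)"
    using assms(2) by (metis funpow_add le_add_diff_inverse2)
  then show ?thesis using assms(1) by (simp add: funpow_g_ginv)
qed

lemma funpow_ginv_g_le:
  assumes "x \<in> space M" "i \<le> n"
  shows "(ginv ^^ i) ((g ^^ n) x) = (g ^^ (n - i)) x"
proof -
  have "(g ^^ n) x = (g ^^ i) ((g ^^ (n - i)) x)"
    using assms(2) by (metis comp_apply funpow_add le_add_diff_inverse)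
  then show ?thesis using assms(1) by (simp add: funpow_ginv_g funpow_g_space)
qed

lemma funpow_ginv_g_ge:
  assumes "x \<in> space M" "n \<le> i"
  shows "(ginv ^^ i) ((g ^^ n) x) = (ginv ^^ (i - n)) x"
proof -
  have "ginv ^^ i = (ginv ^^ (i - n)) \<circ> (ginv ^^ n)"
    using assms(2) by (metis funpow_add le_add_diff_inverse2)
  then show ?thesis using assms(1) by (simp add: funpow_ginv_g)
qed

lemma image_funpow_g_eq_vimage:
  "E \<subseteq> space M \<Longrightarrow> (g ^^ n) ` E = (ginv ^^ n) -` E \<inter> space M"
  using funpow_g_space funpow_ginv_space funpow_ginv_g funpow_g_ginv
  by (auto, metis image_eqI)

lemma measurable_funpow_g: "g ^^ n \<in> M \<rightarrow>\<^sub>M M"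
proof (induction n)
  case (Suc n)
  have "g \<in> M \<rightarrow>\<^sub>M M" using measure_preserving by (simp add: measure_preserving_def)
  then show ?case using measurable_comp[OF Suc] by (simp add: o_def)
qed (simp add: measurable_ident[unfolded id_def])

lemma measurable_funpow_ginv: "ginv ^^ n \<in> M \<rightarrow>\<^sub>M M"
proof (induction n)
  case (Suc n)
  then show ?case using measurable_comp[OF Suc inverse_measurable] by (simp add: ginv_def o_def)
qed (simp add: measurable_ident[unfolded id_def])

lemma emeasure_funpow_g_vimage:
  "A \<in> sets M \<Longrightarrow> emeasure M ((g ^^ n) -` A \<inter> space M) = emeasure M A"
proof (induction n arbitrary: A)
  case (Suc n)
  have pre: "g -` A \<inter> space M \<in> sets M"
    using measure_preserving Suc.prems by (auto simp: measure_preserving_def)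
  have "(g ^^ Suc n) -` A \<inter> space M = (g ^^ n) -` (g -` A \<inter> space M) \<inter> space M"
    using funpow_g_space by auto
  then have "emeasure M ((g ^^ Suc n) -` A \<inter> space M) = emeasure M (g -` A \<inter> space M)"
    using Suc.IH[OF pre] by (simp only:)
  also have "\<dots> = emeasure M A"
    using measure_preserving Suc.prems by (simp add: measure_preserving_def)
  finally show ?case .
qed simp

lemma sets_image_funpow_g: "E \<in> sets M \<Longrightarrow> (g ^^ n) ` E \<in> sets M"
  using image_funpow_g_eq_vimage[OF sets.sets_into_space] measurable_funpow_ginv
  by (metis measurable_sets)

lemma emeasure_image_funpow_g: "E \<in> sets M \<Longrightarrow> emeasure M ((g ^^ n) ` E) = emeasure M E"
proof -
  assume E: "E \<in> sets M"
  have "(g ^^ n) -` ((g ^^ n) ` E) \<inter> space M = E"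
    using sets.sets_into_space[OF E] funpow_g_space funpow_ginv_g by (auto, metis subsetD)
  moreover have "emeasure M ((g ^^ n) -` ((g ^^ n) ` E) \<inter> space M) = emeasure M ((g ^^ n) ` E)"
    by (rule emeasure_funpow_g_vimage[OF sets_image_funpow_g[OF E]])
  ultimately show ?thesis by simp
qed

lemma emeasure_funpow_ginv_vimage:
  "A \<in> sets M \<Longrightarrow> emeasure M ((ginv ^^ n) -` A \<inter> space M) = emeasure M A"
  using image_funpow_g_eq_vimage emeasure_image_funpow_g sets.sets_into_space by metis

definition orbit_avoiding :: "'a set \<Rightarrow> 'a set" where
  "orbit_avoiding Z = {y \<in> space M. \<forall>j. (ginv ^^ j) y \<notin> Z \<and> (g ^^ j) y \<notin> Z}"

lemma orbit_avoiding_space: "orbit_avoiding Z \<subseteq> space M"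
  unfolding orbit_avoiding_def by auto

lemma orbit_avoiding_not_in: "y \<in> orbit_avoiding Z \<Longrightarrow> y \<notin> Z"
  unfolding orbit_avoiding_def by (metis (mono_tags, lifting) mem_Collect_eq funpow_0)

lemma orbit_avoiding_funpow_g:
  assumes y: "y \<in> orbit_avoiding Z"
  shows "(g ^^ n) y \<in> orbit_avoiding Z"
proof -
  have ys: "y \<in> space M" using y orbit_avoiding_space by auto
  have "(ginv ^^ j) ((g ^^ n) y) \<notin> Z" for j
    using y funpow_ginv_g_le[OF ys, of j n] funpow_ginv_g_ge[OF ys, of n j]
    unfolding orbit_avoiding_def by (cases "j \<le> n") auto
  moreover have "(g ^^ j) ((g ^^ n) y) = (g ^^ (j + n)) y" for j by (simp add: funpow_add)
  ultimately show ?thesis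
    using y funpow_g_space[OF ys] unfolding orbit_avoiding_def by auto
qed

lemma orbit_avoiding_funpow_ginv:
  assumes y: "y \<in> orbit_avoiding Z"
  shows "(ginv ^^ n) y \<in> orbit_avoiding Z"
proof -
  have ys: "y \<in> space M" using y orbit_avoiding_space by auto
  have "(g ^^ j) ((ginv ^^ n) y) \<notin> Z" for j
    using y funpow_g_ginv_le[OF ys, of j n] funpow_g_ginv_ge[OF ys, of n j]
    unfolding orbit_avoiding_def by (cases "j \<le> n") auto
  moreover have "(ginv ^^ j) ((ginv ^^ n) y) = (ginv ^^ (j + n)) y" for j by (simp add: funpow_add)
  ultimately show ?thesis
    using y funpow_ginv_space[OF ys] unfolding orbit_avoiding_def by auto
qed

lemma null_sets_diff_orbit_avoiding:
  assumes Z: "Z \<in> null_sets M"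
  shows "space M - orbit_avoiding Z \<in> null_sets M"
proof -
  have eq: "space M - orbit_avoiding Z
      = (\<Union>j. (ginv ^^ j) -` Z \<inter> space M) \<union> (\<Union>j. (g ^^ j) -` Z \<inter> space M)"
    unfolding orbit_avoiding_def by auto
  have "(ginv ^^ j) -` Z \<inter> space M \<in> null_sets M" for j
    using Z emeasure_funpow_ginv_vimage measurable_sets[OF measurable_funpow_ginv]
    by (auto simp: null_sets_def)
  moreover have "(g ^^ j) -` Z \<inter> space M \<in> null_sets M" for j
    using Z emeasure_funpow_g_vimage measurable_sets[OF measurable_funpow_g]
    by (auto simp: null_sets_def)
  ultimately show ?thesis unfolding eq by (intro null_sets.Un null_sets_UN)
qed

lemma sets_orbit_avoiding: "Z \<in> null_sets M \<Longrightarrow> orbit_avoiding Z \<in> sets M"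
  using null_sets_diff_orbit_avoiding[of Z] orbit_avoiding_space[of Z]
  by (metis Diff_Diff_Int inf.absorb_iff2 null_setsD2 sets.Diff sets.top)

end

lemma infinite_returns_funpow_shift:
  fixes f :: "'a \<Rightarrow> 'a"
  assumes meet: "(f ^^ n) y = (f ^^ m) b" and inf: "infinite {i. (f ^^ i) b \<in> E}"
  shows "infinite {i. (f ^^ i) y \<in> E}"
  unfolding infinite_nat_iff_unbounded_le
proof
  fix k
  obtain i where i: "k + m \<le> i" "(f ^^ i) b \<in> E"
    using inf unfolding infinite_nat_iff_unbounded_le by blast
  have "(f ^^ (i - m + n)) y = (f ^^ (i - m)) ((f ^^ m) b)"
    by (simp add: funpow_add meet)
  also have "\<dots> = (f ^^ (i - m + m)) b" by (simp add: funpow_add)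
  also have "\<dots> = (f ^^ i) b" using i(1) by simp
  finally show "\<exists>j\<ge>k. j \<in> {i. (f ^^ i) y \<in> E}" using i by (intro exI[of _ "i - m + n"]) auto
qed

lemma (in invertible_mps) AE_infinite_backward_returns:
  assumes "finite_measure M" and E: "E \<in> sets M"
  shows "AE x in M. x \<in> E \<longrightarrow> infinite {i. (ginv ^^ i) x \<in> E}"
proof -
  interpret finite_measure M by fact
  define W where "W = {x\<in>E. \<forall>i. (ginv ^^ Suc i) x \<notin> E}"
  have "W = E \<inter> (\<Inter>i. (ginv ^^ Suc i) -` (space M - E) \<inter> space M)"
    using sets.sets_into_space[OF E] funpow_ginv_space unfolding W_def by blast
  moreover have "(\<Inter>i. (ginv ^^ Suc i) -` (space M - E) \<inter> space M) \<in> sets M"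
    by (rule sets.countable_INT')
      (use E in \<open>auto intro!: measurable_sets[OF measurable_funpow_ginv] simp del: funpow.simps\<close>)
  ultimately have W_sets: "W \<in> sets M" by (metis E sets.Int)
  then have W_space: "W \<inter> space M = W" using sets.sets_into_space by blast
  define P where "P j = (ginv ^^ j) -` W \<inter> space M" for j
  \<comment> \<open>W is wandering for ginv: its preimages are disjoint and have equal measure.\<close>
  have P_sets: "range P \<subseteq> sets M"
    using W_sets measurable_sets[OF measurable_funpow_ginv] by (auto simp: P_def)
  have "disjoint_family P"
  proof -
    have "P a \<inter> P b = {}" if "a < b" for a b
    proof (intro equalityI subsetI)
      fix x assume x: "x \<in> P a \<inter> P b"
      have "(ginv ^^ b) x = (ginv ^^ Suc (b - a - 1)) ((ginv ^^ a) x)"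
        using \<open>a < b\<close> by (metis Suc_diff_Suc comp_apply diff_Suc_1 funpow_add
            le_add_diff_inverse2 less_imp_le_nat)
      then show "x \<in> {}" using x unfolding P_def W_def by auto
    qed simp
    then show ?thesis unfolding disjoint_family_on_def by (metis inf_commute linorder_neqE_nat)
  qed
  moreover have "measure M (P j) = measure M (P 0)" for j
    using emeasure_funpow_ginv_vimage[OF W_sets] by (simp add: P_def measure_def W_space)
  ultimately have "P 0 \<in> null_sets M" by (intro disjoint_family_equal_measure_null P_sets)
  then have P_null: "P j \<in> null_sets M" for j
    using P_sets emeasure_funpow_ginv_vimage[OF W_sets]
    by (auto simp: P_def null_sets_def W_space)
  show ?thesis
  proof (rule AE_I')
    show "(\<Union>j. P j) \<in> null_sets M" using P_null by blast
    show "{x \<in> space M. \<not> (x \<in> E \<longrightarrow> infinite {i. (ginv ^^ i) x \<in> E})} \<subseteq> (\<Union>j. P j)"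
    proof
      fix x assume "x \<in> {x \<in> space M. \<not> (x \<in> E \<longrightarrow> infinite {i. (ginv ^^ i) x \<in> E})}"
      then have x: "x \<in> space M" "x \<in> E" and fin: "finite {i. (ginv ^^ i) x \<in> E}" by auto
      define n where "n = Max {i. (ginv ^^ i) x \<in> E}"
      have "0 \<in> {i. (ginv ^^ i) x \<in> E}" using x by simp
      then have "(ginv ^^ n) x \<in> E" unfolding n_def using fin Max_in by blast
      moreover have "(ginv ^^ Suc i) ((ginv ^^ n) x) \<notin> E" for i
      proof
        assume "(ginv ^^ Suc i) ((ginv ^^ n) x) \<in> E"
        then have "Suc i + n \<in> {i. (ginv ^^ i) x \<in> E}" by (simp add: funpow_add)
        then show False using Max_ge[OF fin] unfolding n_def by fastforce
      qed
      ultimately show "x \<in> (\<Union>j. P j)" using x unfolding P_def W_def by blast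
    qed
  qed
qed

section \<open>Towers over the base of the induced map\<close>

locale induced_map = invertible_mps M g + finite_measure M
  for M :: "'a measure" and g :: "'a \<Rightarrow> 'a" +
  fixes B :: "'a set" and N :: "'a \<Rightarrow> nat"
  assumes B_sets: "B \<in> sets M"
    and N_measurable: "N \<in> restrict_space M B \<rightarrow>\<^sub>M count_space UNIV"
    and N_pos: "\<And>x. x \<in> B \<Longrightarrow> 1 \<le> N x"
    and AE_returns: "AE x in M. x \<in> B \<longrightarrow> (g ^^ N x) x \<in> B"
    and N_integrable: "(\<integral>\<^sup>+x\<in>B. of_nat (N x) \<partial>M) < \<infinity>"
begin

definition induced :: "'a \<Rightarrow> 'a" where "induced x = (g ^^ N x) x"

lemma B_space: "B \<subseteq> space M"
  using B_sets by (rule sets.sets_into_space)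

lemma sets_N_pred: "A \<in> sets M \<Longrightarrow> A \<subseteq> B \<Longrightarrow> {x\<in>A. P (N x)} \<in> sets M"
proof -
  assume A: "A \<in> sets M" "A \<subseteq> B"
  have "N -` {n. P n} \<inter> space (restrict_space M B) \<in> sets (restrict_space M B)"
    using N_measurable measurable_sets by fastforce
  moreover have "N -` {n. P n} \<inter> space (restrict_space M B) = {x\<in>B. P (N x)}"
    using B_space by (auto simp: space_restrict_space)
  ultimately have "{x\<in>B. P (N x)} \<in> sets M"
    using B_sets by (metis (no_types, lifting) sets.Int_space_eq2 sets_restrict_space_iff)
  moreover have "{x\<in>A. P (N x)} = A \<inter> {x\<in>B. P (N x)}" using A by auto
  ultimately show ?thesis using A by auto
qed

lemma funpow_ginv_induced: "x \<in> space M \<Longrightarrow> (ginv ^^ N x) (induced x) = x"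
  unfolding induced_def by (rule funpow_ginv_g)

lemma induced_image_eq: "induced ` A = (\<Union>n. (g ^^ n) ` {x\<in>A. N x = n})"
  unfolding induced_def by auto

lemma sets_induced_image: "A \<in> sets M \<Longrightarrow> A \<subseteq> B \<Longrightarrow> induced ` A \<in> sets M"
  unfolding induced_image_eq by (auto intro!: sets_image_funpow_g sets_N_pred)

definition tower_floor :: "'a set \<Rightarrow> nat \<Rightarrow> 'a set" where
  "tower_floor A i = (ginv ^^ i) -` {x\<in>A. i < N x} \<inter> space M"

definition floors :: "'a set \<Rightarrow> 'a \<Rightarrow> nat set" where
  "floors A y = {i. y \<in> tower_floor A i}"

lemma mem_floors:
  "y \<in> space M \<Longrightarrow> i \<in> floors A y \<longleftrightarrow> (ginv ^^ i) y \<in> A \<and> i < N ((ginv ^^ i) y)"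
  unfolding floors_def tower_floor_def by auto

lemma sets_tower_floor: "A \<in> sets M \<Longrightarrow> A \<subseteq> B \<Longrightarrow> tower_floor A i \<in> sets M"
  unfolding tower_floor_def by (intro measurable_sets[OF measurable_funpow_ginv] sets_N_pred)

lemma suminf_emeasure_tower_floor:
  assumes A: "A \<in> sets M" "A \<subseteq> B"
  shows "(\<Sum>i. emeasure M (tower_floor A i)) = (\<integral>\<^sup>+x\<in>A. of_nat (N x) \<partial>M)"
proof -
  have level_sets: "{x\<in>A. i < N x} \<in> sets M" for i using sets_N_pred[OF A] .
  have "(\<Sum>i. emeasure M (tower_floor A i)) = (\<Sum>i. emeasure M {x\<in>A. i < N x})"
    unfolding tower_floor_def using emeasure_funpow_ginv_vimage[OF level_sets] by simp
  also have "\<dots> = (\<integral>\<^sup>+x. (\<Sum>i. indicator {x\<in>A. i < N x} x) \<partial>M)"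
    using level_sets by (simp add: nn_integral_suminf)
  also have "\<dots> = (\<integral>\<^sup>+x\<in>A. of_nat (N x) \<partial>M)"
  proof (intro nn_integral_cong)
    fix x
    have "(\<Sum>i. indicator {x\<in>A. i < N x} x :: ennreal) = indicator A x * (\<Sum>i. indicator {..<N x} i)"
      by (auto simp: indicator_def)
    then show "(\<Sum>i. indicator {x\<in>A. i < N x} x) = (of_nat (N x) * indicator A x :: ennreal)"
      by (simp add: suminf_indicator_nat mult.commute)
  qed
  finally show ?thesis .
qed

lemma AE_finite_floors: "AE y in M. finite (floors B y)"
proof -
  define f where "f y = (\<Sum>i. indicator (tower_floor B i) y :: ennreal)" for y
  have f_measurable: "f \<in> borel_measurable M"
    unfolding f_def using sets_tower_floor[OF B_sets order_refl] by measurable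
  have "integral\<^sup>N M f = (\<Sum>i. emeasure M (tower_floor B i))"
    unfolding f_def using sets_tower_floor[OF B_sets order_refl] by (simp add: nn_integral_suminf)
  then have "integral\<^sup>N M f \<noteq> \<infinity>"
    using N_integrable suminf_emeasure_tower_floor[OF B_sets order_refl] by simp
  then have "AE y in M. f y \<noteq> \<infinity>" using f_measurable nn_integral_PInf_AE by blast
  moreover have "f y = emeasure (count_space UNIV) (floors B y)" for y
  proof -
    have "(\<lambda>i. indicator (tower_floor B i) y :: ennreal) = indicator (floors B y)"
      by (auto simp: floors_def indicator_def)
    then show ?thesis unfolding f_def by (simp add: suminf_indicator_nat)
  qed
  ultimately have "AE y in M. emeasure (count_space UNIV) (floors B y) \<noteq> \<infinity>" by simp
  then show ?thesis by eventually_elim (metis emeasure_count_space_infinite subset_UNIV)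
qed

definition regular :: "'a \<Rightarrow> bool" where
  "regular x \<longleftrightarrow> finite (floors B x) \<and> (x \<in> B \<longrightarrow> induced x \<in> B \<and> infinite {i. (ginv ^^ i) x \<in> B})"

lemma AE_regular: "AE x in M. regular x"
  using AE_finite_floors AE_returns AE_infinite_backward_returns[OF finite_measure_axioms B_sets]
  unfolding regular_def induced_def by eventually_elim auto

definition exceptional :: "'a set" where
  "exceptional = (SOME Z. Z \<in> null_sets M \<and> (\<forall>x \<in> space M - Z. regular x))"

lemma exceptional: "exceptional \<in> null_sets M" "x \<in> space M - exceptional \<Longrightarrow> regular x"
proof -
  have "\<exists>Z. Z \<in> null_sets M \<and> (\<forall>x \<in> space M - Z. regular x)"
    using AE_regular by (metis AE_E3)
  then have "exceptional \<in> null_sets M \<and> (\<forall>x \<in> space M - exceptional. regular x)"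
    unfolding exceptional_def by (rule someI_ex)
  then show "exceptional \<in> null_sets M" "x \<in> space M - exceptional \<Longrightarrow> regular x" by auto
qed

definition good :: "'a set" where "good = orbit_avoiding exceptional"

lemma good_regular: "y \<in> good \<Longrightarrow> regular y"
  using exceptional(2) orbit_avoiding_space orbit_avoiding_not_in unfolding good_def by blast

lemma good_space: "good \<subseteq> space M"
  unfolding good_def by (rule orbit_avoiding_space)

lemma good_funpow_g: "y \<in> good \<Longrightarrow> (g ^^ n) y \<in> good"
  unfolding good_def by (rule orbit_avoiding_funpow_g)

lemma good_funpow_ginv: "y \<in> good \<Longrightarrow> (ginv ^^ n) y \<in> good"
  unfolding good_def by (rule orbit_avoiding_funpow_ginv)

lemma null_sets_diff_good: "space M - good \<in> null_sets M"
  unfolding good_def using exceptional(1) by (rule null_sets_diff_orbit_avoiding)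

definition B_good :: "'a set" where "B_good = B \<inter> good"

lemma sets_B_good: "B_good \<in> sets M"
  unfolding B_good_def good_def using B_sets sets_orbit_avoiding[OF exceptional(1)] by auto

lemma induced_B_good: "x \<in> B_good \<Longrightarrow> induced x \<in> B_good"
  using good_regular good_funpow_g unfolding B_good_def regular_def induced_def by auto

lemma funpow_induced_B_good_subset: "(induced ^^ k) ` B_good \<subseteq> B_good"
  by (induction k) (auto simp: image_comp[symmetric] induced_B_good)

lemma sets_funpow_induced_B_good: "(induced ^^ k) ` B_good \<in> sets M"
proof (induction k)
  case (Suc k)
  have "(induced ^^ Suc k) ` B_good = induced ` ((induced ^^ k) ` B_good)"
    by (simp add: image_comp)
  then show ?case
    using sets_induced_image[OF Suc] funpow_induced_B_good_subset B_good_def by auto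
qed (simp add: sets_B_good)

lemma funpow_induced_B_good_antimono:
  assumes "k \<le> k'"
  shows "(induced ^^ k') ` B_good \<subseteq> (induced ^^ k) ` B_good"
proof -
  obtain d where d: "k' = k + d" using assms by (metis le_add_diff_inverse)
  have "(induced ^^ k') ` B_good = (induced ^^ k) ` ((induced ^^ d) ` B_good)"
    unfolding d funpow_add by (simp add: image_comp)
  then show ?thesis using image_mono[OF funpow_induced_B_good_subset] by simp
qed

section \<open>The kernel\<close>

definition core :: "'a set" where "core = (\<Inter>k. (induced ^^ k) ` B_good)"

lemma sets_core: "core \<in> sets M"
  unfolding core_def using sets_funpow_induced_B_good by (intro sets.countable_INT') auto

lemma core_subset: "core \<subseteq> B_good"
proof
  fix x assume "x \<in> core"
  then have "x \<in> (induced ^^ 0) ` B_good" unfolding core_def by blast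
  then show "x \<in> B_good" by simp
qed

lemma induced_core_subset: "induced ` core \<subseteq> core"
proof
  fix c assume "c \<in> induced ` core"
  then obtain x where x: "x \<in> core" "c = induced x" by auto
  have "c \<in> (induced ^^ k) ` B_good" for k
  proof -
    have "x \<in> (induced ^^ k) ` B_good" using x unfolding core_def by auto
    then have "c \<in> (induced ^^ Suc k) ` B_good" using x by (auto simp: image_comp[symmetric])
    then show ?thesis using funpow_induced_B_good_antimono[of k "Suc k"] by auto
  qed
  then show "c \<in> core" unfolding core_def by auto
qed

text \<open>A point \<open>c\<close> of \<open>core\<close> has a preimage in each of the decreasing sets
  \<open>induced\<^sup>k B_good\<close>; these preimages sit on the finitely many floors over \<open>ginv c\<close>,
  so by pigeonhole a single one serves for every \<open>k\<close>.\<close>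

lemma core_subset_induced_image: "core \<subseteq> induced ` core"
proof
  fix c assume c: "c \<in> core"
  then have "c \<in> B_good" using core_subset by auto
  then have c_space: "c \<in> space M" and "ginv c \<in> good"
    using good_space good_funpow_ginv[of c 1] by (auto simp: B_good_def)
  then have fin: "finite (floors B (ginv c))" using good_regular regular_def by blast
  let ?P = "\<lambda>j k. (ginv ^^ Suc j) c \<in> (induced ^^ k) ` B_good \<and> Suc j = N ((ginv ^^ Suc j) c)"
  have "\<exists>j\<in>floors B (ginv c). \<forall>k. ?P j k"
  proof (rule finite_pigeonhole_antimono[OF fin])
    fix k
    have "c \<in> (induced ^^ Suc k) ` B_good" using c unfolding core_def by blast
    then obtain d where d: "d \<in> (induced ^^ k) ` B_good" "induced d = c"
      by (auto simp: image_comp[symmetric])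
    then have "d \<in> B_good" using funpow_induced_B_good_subset by blast
    then have "d \<in> B" "d \<in> space M" using B_good_def good_space by auto
    then obtain j where j: "N d = Suc j" using N_pos[of d] not0_implies_Suc by fastforce
    have dj: "(ginv ^^ Suc j) c = d" using funpow_ginv_induced[OF \<open>d \<in> space M\<close>] d j by simp
    have "(ginv ^^ j) (ginv c) = (ginv ^^ Suc j) c"
      by (simp add: funpow_Suc_right del: funpow.simps)
    then have "j \<in> floors B (ginv c)"
      using dj \<open>d \<in> B\<close> j ginv_space[OF c_space] by (simp add: mem_floors)
    then show "\<exists>j\<in>floors B (ginv c). ?P j k" using dj d j by auto
  next
    fix j k k' assume "k \<le> k'" "?P j k'"
    then show "?P j k" using funpow_induced_B_good_antimono by blast
  qed
  then obtain j where j: "\<forall>k. ?P j k" by blast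
  then have "(ginv ^^ Suc j) c \<in> core" unfolding core_def by blast
  moreover have "N ((ginv ^^ Suc j) c) = Suc j" using conjunct2[OF spec[OF j, of 0]] by (rule sym)
  then have "induced ((ginv ^^ Suc j) c) = c"
    by (simp only: induced_def funpow_g_ginv[OF c_space])
  ultimately show "c \<in> induced ` core" by (metis image_eqI)
qed

lemma induced_image_core: "induced ` core = core"
  using induced_core_subset core_subset_induced_image by blast

lemma induced_funpow_ginv:
  assumes "y \<in> space M" "N ((ginv ^^ i) y) \<le> i"
  shows "induced ((ginv ^^ i) y) = (ginv ^^ (i - N ((ginv ^^ i) y))) y"
  unfolding induced_def using funpow_g_ginv_le[OF assms] .

lemma descent_reaches_floor:
  assumes y: "y \<in> space M"
  shows "(ginv ^^ i) y \<in> B_good \<Longrightarrow>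
    \<exists>m i'. (induced ^^ m) ((ginv ^^ i) y) = (ginv ^^ i') y \<and> i' < N ((ginv ^^ i') y)"
proof (induction i rule: less_induct)
  case (less i)
  show ?case
  proof (cases "i < N ((ginv ^^ i) y)")
    case True
    then show ?thesis by (metis funpow_0)
  next
    case False
    let ?i = "i - N ((ginv ^^ i) y)"
    have step: "induced ((ginv ^^ i) y) = (ginv ^^ ?i) y"
      using induced_funpow_ginv[OF y] False by simp
    have "N ((ginv ^^ i) y) \<ge> 1" using N_pos less.prems B_good_def by auto
    then have "?i < i" using False by simp
    moreover have "(ginv ^^ ?i) y \<in> B_good" using induced_B_good[OF less.prems] step by simp
    ultimately obtain m i' where "(induced ^^ m) ((ginv ^^ ?i) y) = (ginv ^^ i') y"
      "i' < N ((ginv ^^ i') y)" using less.IH by blast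
    moreover have "(induced ^^ Suc m) ((ginv ^^ i) y) = (induced ^^ m) ((ginv ^^ ?i) y)"
      using step by (simp add: funpow_Suc_right del: funpow.simps)
    ultimately show ?thesis by metis
  qed
qed

text \<open>For points \<open>ginv\<^sup>i y\<close> of \<open>B_good\<close> far enough back, the descent under \<open>induced\<close>
  needs at least \<open>k\<close> steps: a single step from \<open>ginv\<^sup>i y\<close> can only jump below
  \<open>ginv\<^sup>D y\<close> if \<open>i - D\<close> is one of the finitely many floors of \<open>ginv\<^sup>D y\<close>.\<close>

lemma descent_reaches_floor_slowly:
  assumes y: "y \<in> good"
  shows "\<exists>D. \<forall>i\<ge>D. (ginv ^^ i) y \<in> B_good \<longrightarrow>
    (\<exists>m\<ge>k. \<exists>i'. (induced ^^ m) ((ginv ^^ i) y) = (ginv ^^ i') y \<and> i' < N ((ginv ^^ i') y))"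
proof (induction k)
  case 0
  show ?case using descent_reaches_floor y good_space by blast
next
  case (Suc k)
  have y_space: "y \<in> space M" using y good_space by auto
  obtain D where D: "\<forall>i\<ge>D. (ginv ^^ i) y \<in> B_good \<longrightarrow>
      (\<exists>m\<ge>k. \<exists>i'. (induced ^^ m) ((ginv ^^ i) y) = (ginv ^^ i') y \<and> i' < N ((ginv ^^ i') y))"
    using Suc by blast
  define z where "z = (ginv ^^ D) y"
  have "z \<in> good" using good_funpow_ginv[OF y] unfolding z_def .
  then have "finite (floors B z)" using good_regular regular_def by blast
  then obtain L where L: "\<And>j. j \<in> floors B z \<Longrightarrow> j < L"
    by (metis finite_nat_set_iff_bounded)
  show ?case
  proof (rule exI[of _ "D + L"], intro allI impI)
    fix i assume i: "D + L \<le> i" and b: "(ginv ^^ i) y \<in> B_good"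
    have "(ginv ^^ (i - D)) z = (ginv ^^ i) y"
      using i unfolding z_def by (metis funpow_add comp_apply le_add1 le_add_diff_inverse2 le_trans)
    then have "i - D \<notin> floors B z \<Longrightarrow> N ((ginv ^^ i) y) \<le> i - D"
      using b funpow_ginv_space[OF y_space] by (auto simp: mem_floors z_def B_good_def)
    then have N_le: "N ((ginv ^^ i) y) \<le> i - D" using L i by fastforce
    let ?i = "i - N ((ginv ^^ i) y)"
    have step: "induced ((ginv ^^ i) y) = (ginv ^^ ?i) y"
      using induced_funpow_ginv[OF y_space] N_le by simp
    have "(ginv ^^ ?i) y \<in> B_good" using induced_B_good[OF b] step by simp
    moreover have "?i \<ge> D" using N_le i by simp
    ultimately obtain m i' where mi: "m \<ge> k" "(induced ^^ m) ((ginv ^^ ?i) y) = (ginv ^^ i') y"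
      "i' < N ((ginv ^^ i') y)" using D by blast
    have "(induced ^^ Suc m) ((ginv ^^ i) y) = (ginv ^^ i') y"
      using mi step by (simp add: funpow_Suc_right del: funpow.simps)
    then show "\<exists>m\<ge>Suc k. \<exists>i'. (induced ^^ m) ((ginv ^^ i) y) = (ginv ^^ i') y \<and> i' < N ((ginv ^^ i') y)"
      using mi by (intro exI[of _ "Suc m"]) auto
  qed
qed

lemma good_in_tower_over_core:
  assumes y: "y \<in> good" and returns: "infinite {i. (ginv ^^ i) y \<in> B}"
  shows "\<exists>i. (ginv ^^ i) y \<in> core \<and> i < N ((ginv ^^ i) y)"
proof -
  have y_space: "y \<in> space M" using y good_space by auto
  let ?Q = "\<lambda>i k. (ginv ^^ i) y \<in> (induced ^^ k) ` B_good \<and> i < N ((ginv ^^ i) y)"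
  have "\<exists>i\<in>floors B y. \<forall>k. ?Q i k"
  proof (rule finite_pigeonhole_antimono)
    show "finite (floors B y)" using good_regular[OF y] regular_def by blast
  next
    fix k
    obtain D where D: "\<forall>i\<ge>D. (ginv ^^ i) y \<in> B_good \<longrightarrow>
        (\<exists>m\<ge>k. \<exists>i'. (induced ^^ m) ((ginv ^^ i) y) = (ginv ^^ i') y \<and> i' < N ((ginv ^^ i') y))"
      using descent_reaches_floor_slowly[OF y] by blast
    obtain i where i: "i \<ge> D" "(ginv ^^ i) y \<in> B"
      using returns unfolding infinite_nat_iff_unbounded_le by blast
    then have b: "(ginv ^^ i) y \<in> B_good"
      using good_funpow_ginv[OF y] B_good_def by auto
    then obtain m i' where mi: "m \<ge> k" "(induced ^^ m) ((ginv ^^ i) y) = (ginv ^^ i') y"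
        "i' < N ((ginv ^^ i') y)"
      using D i by blast
    have "(ginv ^^ i') y \<in> (induced ^^ m) ` B_good" using mi b by (metis image_eqI)
    then have "(ginv ^^ i') y \<in> (induced ^^ k) ` B_good"
      using funpow_induced_B_good_antimono mi by blast
    moreover have "i' \<in> floors B y"
      using calculation mi y_space funpow_induced_B_good_subset
      by (auto simp: mem_floors B_good_def)
    ultimately show "\<exists>i\<in>floors B y. ?Q i k" using mi by blast
  next
    fix j k k' assume "k \<le> k'" "?Q j k'"
    then show "?Q j k" using funpow_induced_B_good_antimono by blast
  qed
  then show ?thesis unfolding core_def by blast
qed

definition core_layer :: "nat \<Rightarrow> 'a set" where "core_layer n = {x\<in>core. N x = n}"

definition collisions :: "'a set" where
  "collisions = (\<Union>n m. if n = m then {} else induced ` core_layer n \<inter> induced ` core_layer m)"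

lemma sets_core_layer: "core_layer n \<in> sets M"
  unfolding core_layer_def
  using sets_N_pred[OF sets_core] core_subset B_good_def by auto

lemma induced_image_core_layer: "induced ` core_layer n = (g ^^ n) ` core_layer n"
  unfolding core_layer_def induced_def by force

lemma collisions_null: "collisions \<in> null_sets M"
proof -
  let ?C = "\<lambda>l. induced ` core_layer l"
  have C_sets: "range ?C \<subseteq> sets M"
    using sets_image_funpow_g[OF sets_core_layer] by (auto simp: induced_image_core_layer)
  have "core \<subseteq> (\<Union>l. ?C l)"
  proof
    fix x assume "x \<in> core"
    then obtain d where "d \<in> core" "x = induced d" using induced_image_core by blast
    then show "x \<in> (\<Union>l. ?C l)" unfolding core_layer_def by blast
  qed
  moreover have "(\<Sum>l. emeasure M (?C l)) = (\<Sum>l. emeasure M (core_layer l))"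
    by (simp add: induced_image_core_layer emeasure_image_funpow_g sets_core_layer)
  moreover have "\<dots> = emeasure M (\<Union>l. core_layer l)"
    using sets_core_layer
    by (intro suminf_emeasure) (auto simp: disjoint_family_on_def core_layer_def)
  moreover have "(\<Union>l. core_layer l) = core" unfolding core_layer_def by auto
  ultimately have overlap_null: "?C n \<inter> ?C m \<in> null_sets M" if "n \<noteq> m" for n m
    using overlap_null_if_suminf_le[OF C_sets sets_core _ _ that] by simp
  show ?thesis unfolding collisions_def using overlap_null by (intro null_sets_UN) auto
qed

text \<open>Discarding the orbits through \<open>collisions\<close> makes \<open>induced\<close> injective.\<close>

definition kernel :: "'a set" where "kernel = core \<inter> orbit_avoiding collisions"

lemma sets_kernel: "kernel \<in> sets M"
  unfolding kernel_def using sets_core sets_orbit_avoiding[OF collisions_null] by auto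

lemma kernel_subset: "kernel \<subseteq> B"
  unfolding kernel_def using core_subset B_good_def by auto

lemma kernel_space: "kernel \<subseteq> space M"
  using kernel_subset B_space by auto

lemma induced_image_kernel: "induced ` kernel = kernel"
proof
  show "induced ` kernel \<subseteq> kernel"
    using induced_core_subset orbit_avoiding_funpow_g unfolding kernel_def induced_def by fastforce
next
  show "kernel \<subseteq> induced ` kernel"
  proof
    fix c assume c: "c \<in> kernel"
    then obtain d where d: "d \<in> core" "induced d = c"
      using core_subset_induced_image kernel_def by auto
    then have "(ginv ^^ N d) c = d"
      using funpow_ginv_induced core_subset B_good_def good_space by auto
    moreover have "(ginv ^^ N d) c \<in> orbit_avoiding collisions"
      using orbit_avoiding_funpow_ginv c kernel_def by auto
    ultimately have "d \<in> orbit_avoiding collisions" by simp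
    then show "c \<in> induced ` kernel" using d kernel_def by auto
  qed
qed

lemma inj_on_induced_kernel: "inj_on induced kernel"
proof
  fix x1 x2 assume x: "x1 \<in> kernel" "x2 \<in> kernel" and eq: "induced x1 = induced x2"
  have "N x1 = N x2"
  proof (rule ccontr)
    assume ne: "N x1 \<noteq> N x2"
    have "x1 \<in> core_layer (N x1)" "x2 \<in> core_layer (N x2)"
      using x unfolding kernel_def core_layer_def by auto
    then have "induced x1 \<in> induced ` core_layer (N x1) \<inter> induced ` core_layer (N x2)"
      using eq by (metis IntI image_eqI)
    then have "induced x1 \<in> collisions"
      unfolding collisions_def using ne
      by (intro UN_I[of "N x1" UNIV, OF UNIV_I] UN_I[of "N x2" UNIV, OF UNIV_I]) simp
    moreover have "induced x1 \<in> kernel" using x induced_image_kernel by auto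
    ultimately show False using orbit_avoiding_not_in unfolding kernel_def by blast
  qed
  then show "x1 = x2"
    using funpow_ginv_induced x eq kernel_space by (metis subsetD)
qed

lemma bij_betw_induced_kernel: "bij_betw induced kernel kernel"
  using inj_on_induced_kernel induced_image_kernel by (simp add: bij_betw_def)

lemma emeasure_induced_image:
  assumes A: "A \<in> sets M" "A \<subseteq> kernel"
  shows "emeasure M (induced ` A) = emeasure M A"
proof -
  have layers: "{x\<in>A. N x = n} \<in> sets M" for n
    using A kernel_subset by (intro sets_N_pred) auto
  have "disjoint_family (\<lambda>n. (g ^^ n) ` {x\<in>A. N x = n})"
    unfolding disjoint_family_on_def
  proof (intro ballI impI)
    fix n m :: nat assume "n \<noteq> m"
    show "(g ^^ n) ` {x\<in>A. N x = n} \<inter> (g ^^ m) ` {x\<in>A. N x = m} = {}"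
    proof (intro equalityI subsetI)
      fix y assume "y \<in> (g ^^ n) ` {x\<in>A. N x = n} \<inter> (g ^^ m) ` {x\<in>A. N x = m}"
      then obtain a b where a: "a \<in> A" "N a = n" and b: "b \<in> A" "N b = m"
        and "(g ^^ n) a = (g ^^ m) b" by blast
      then have "induced a = induced b" unfolding induced_def by simp
      then have "a = b" using inj_on_induced_kernel A(2) a b by (auto dest: inj_onD)
      then show "y \<in> {}" using a b \<open>n \<noteq> m\<close> by simp
    qed simp
  qed
  then have "emeasure M (induced ` A) = (\<Sum>n. emeasure M ((g ^^ n) ` {x\<in>A. N x = n}))"
    unfolding induced_image_eq using layers sets_image_funpow_g
    by (intro suminf_emeasure[symmetric]) auto
  also have "\<dots> = (\<Sum>n. emeasure M {x\<in>A. N x = n})"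
    using layers by (simp add: emeasure_image_funpow_g)
  also have "\<dots> = emeasure M (\<Union>n. {x\<in>A. N x = n})"
    using layers by (intro suminf_emeasure) (auto simp: disjoint_family_on_def)
  also have "(\<Union>n. {x\<in>A. N x = n}) = A" by blast
  finally show ?thesis .
qed

lemma measure_preserving_induced_kernel:
  "induced \<in> measure_preserving (restrict_space M kernel) (restrict_space M kernel)"
proof (rule measure_preserving_restrict_space[OF sets_kernel])
  show "induced x \<in> kernel" if "x \<in> kernel" for x using that induced_image_kernel by blast
  fix C assume C: "C \<in> sets M" "C \<subseteq> kernel"
  have "induced -` C \<inter> kernel = (\<Union>n. {x\<in>kernel. N x = n} \<inter> ((g ^^ n) -` C \<inter> space M))"
    unfolding induced_def using kernel_space by auto
  then show vimage_sets: "induced -` C \<inter> kernel \<in> sets M"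
    by (auto intro!: sets_N_pred[OF sets_kernel kernel_subset]
        measurable_sets[OF measurable_funpow_g C(1)])
  have "induced ` (induced -` C \<inter> kernel) = C \<inter> induced ` kernel" by blast
  then have "induced ` (induced -` C \<inter> kernel) = C"
    using C(2) induced_image_kernel by (simp add: Int_absorb2)
  then show "emeasure M (induced -` C \<inter> kernel) = emeasure M C"
    using emeasure_induced_image[OF vimage_sets] by auto
qed

lemma measure_preserving_inv_induced_kernel:
  "the_inv_into kernel induced \<in> measure_preserving (restrict_space M kernel) (restrict_space M kernel)"
proof (rule measure_preserving_restrict_space[OF sets_kernel])
  show "the_inv_into kernel induced x \<in> kernel" if "x \<in> kernel" for x
    using that bij_betw_induced_kernel by (metis bij_betw_def order_refl the_inv_into_into)
  fix C assume C: "C \<in> sets M" "C \<subseteq> kernel"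
  have "the_inv_into kernel induced -` C \<inter> kernel = induced ` C"
    using bij_betw_induced_kernel C(2)
    by (auto simp: bij_betw_def the_inv_into_f_f f_the_inv_into_f[symmetric] intro!: image_eqI)
  then show "the_inv_into kernel induced -` C \<inter> kernel \<in> sets M"
    "emeasure M (the_inv_into kernel induced -` C \<inter> kernel) = emeasure M C"
    using sets_induced_image[OF C(1)] C kernel_subset emeasure_induced_image by auto
qed

lemma infinite_returns_saturation:
  assumes y: "y \<in> good" "y \<in> (\<Union>j::int. ipow (space M) g j ` B)"
  shows "infinite {i. (ginv ^^ i) y \<in> B}"
proof -
  obtain j b where b: "b \<in> B" "y = ipow (space M) g j b" using y(2) by blast
  then have b_space: "b \<in> space M" using B_space by auto
  obtain n m where meet: "(ginv ^^ n) y = (ginv ^^ m) b" and "b \<in> good"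
  proof (cases "0 \<le> j")
    case True
    then have "(ginv ^^ nat j) y = (ginv ^^ 0) b"
      using b funpow_ginv_g[OF b_space] by (simp add: ipow_eq)
    moreover have "b \<in> good" using calculation good_funpow_ginv[OF y(1)] by (metis funpow_0)
    ultimately show ?thesis using that by blast
  next
    case False
    then have "(ginv ^^ 0) y = (ginv ^^ nat (- j)) b" using b by (simp add: ipow_eq)
    moreover have "b \<in> good"
      using b False funpow_g_ginv[OF b_space] good_funpow_g[OF y(1), of "nat (- j)"]
      by (simp add: ipow_eq)
    ultimately show ?thesis using that by blast
  qed
  then have "infinite {i. (ginv ^^ i) b \<in> B}" using good_regular b regular_def by blast
  then show ?thesis using meet by (rule infinite_returns_funpow_shift[rotated])
qed

lemma saturation_subset_towers:
  "(\<Union>j::int. ipow (space M) g j ` B)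
     \<subseteq> (\<Union>i. tower_floor kernel i) \<union> (space M - good) \<union> (space M - orbit_avoiding collisions)"
proof
  fix y assume y: "y \<in> (\<Union>j::int. ipow (space M) g j ` B)"
  have y_space: "y \<in> space M"
    using y B_space funpow_g_space funpow_ginv_space by (auto simp: ipow_eq)
  show "y \<in> (\<Union>i. tower_floor kernel i) \<union> (space M - good) \<union> (space M - orbit_avoiding collisions)"
  proof (cases "y \<in> good \<and> y \<in> orbit_avoiding collisions")
    case True
    then obtain i where i: "(ginv ^^ i) y \<in> core" "i < N ((ginv ^^ i) y)"
      using good_in_tower_over_core infinite_returns_saturation y by blast
    moreover have "(ginv ^^ i) y \<in> orbit_avoiding collisions"
      using True orbit_avoiding_funpow_ginv by blast
    ultimately have "i \<in> floors kernel y" using y_space by (simp add: mem_floors kernel_def)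
    then show ?thesis unfolding floors_def by blast
  qed (use y_space in blast)
qed

lemma emeasure_le_if_subset_saturation:
  assumes "A \<subseteq> (\<Union>j::int. ipow (space M) g j ` B)"
  shows "emeasure M A \<le> (\<integral>\<^sup>+x\<in>kernel. of_nat (N x) \<partial>M)"
proof -
  let ?T = "\<Union>i. tower_floor kernel i"
  let ?Z = "(space M - good) \<union> (space M - orbit_avoiding collisions)"
  have floor_sets: "range (tower_floor kernel) \<subseteq> sets M"
    using sets_tower_floor[OF sets_kernel kernel_subset] by auto
  have Z_null: "?Z \<in> null_sets M"
    using null_sets_diff_good null_sets_diff_orbit_avoiding[OF collisions_null] by auto
  have "emeasure M A \<le> emeasure M (?T \<union> ?Z)"
    using assms saturation_subset_towers floor_sets Z_null
    by (intro emeasure_mono) (auto simp: Un_assoc)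
  also have "\<dots> = emeasure M ?T"
    using floor_sets Z_null by (intro emeasure_Un_null_set) auto
  also have "\<dots> \<le> (\<Sum>i. emeasure M (tower_floor kernel i))"
    using floor_sets by (rule emeasure_subadditive_countably)
  also have "\<dots> = (\<integral>\<^sup>+x\<in>kernel. of_nat (N x) \<partial>M)"
    by (rule suminf_emeasure_tower_floor[OF sets_kernel kernel_subset])
  finally show ?thesis .
qed

lemma measure_kernel_pos:
  assumes "measure M B > 0"
  shows "measure M kernel > 0"
proof (rule ccontr)
  assume "\<not> measure M kernel > 0"
  then have "kernel \<in> null_sets M"
    using sets_kernel measure_nonneg[of M kernel] by (auto simp: emeasure_eq_measure null_sets_def)
  then have "(\<integral>\<^sup>+x\<in>kernel. of_nat (N x) \<partial>M) = 0" by (rule nn_integral_null_set)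
  moreover have "B \<subseteq> (\<Union>j::int. ipow (space M) g j ` B)"
  proof
    fix x assume "x \<in> B"
    then have "x \<in> ipow (space M) g 0 ` B" by (simp add: ipow_eq)
    then show "x \<in> (\<Union>j::int. ipow (space M) g j ` B)" by blast
  qed
  ultimately have "emeasure M B = 0" using emeasure_le_if_subset_saturation by (simp add: le_zero_eq)
  then show False using assms by (simp add: emeasure_eq_measure)
qed

end

theorem theorem3p2:
  fixes M :: "'a measure" and g :: "'a \<Rightarrow> 'a" and B :: "'a set" and N :: "'a \<Rightarrow> nat"
  assumes "prob_space M"
    and g_mp: "g \<in> measure_preserving M M"
    and g_bij: "bij_betw g (space M) (space M)"
    and g_inv_meas: "the_inv_into (space M) g \<in> measurable M M"
    and no_periodic: "\<forall>x\<in>space M. \<forall>n>0. (g ^^ n) x \<noteq> x"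
    and B_meas: "B \<in> sets M" and B_pos: "measure M B > 0"
    and N_meas: "N \<in> measurable (restrict_space M B) (count_space UNIV)"
    and N_pos: "\<forall>x\<in>B. N x \<ge> 1"
    and return: "AE x in M. x \<in> B \<longrightarrow> (g ^^ N x) x \<in> B"
    and N_int: "(\<integral>\<^sup>+x\<in>B. of_nat (N x) \<partial>M) < \<infinity>"
  shows "\<exists>B'. B' \<in> sets M \<and> B' \<subseteq> B \<and> measure M B' > 0
      \<and> (\<lambda>x. (g ^^ N x) x) ` B' = B'
      \<and> bij_betw (\<lambda>x. (g ^^ N x) x) B' B'
      \<and> (\<lambda>x. (g ^^ N x) x) \<in> measure_preserving (restrict_space M B') (restrict_space M B')
      \<and> the_inv_into B' (\<lambda>x. (g ^^ N x) x) \<in> measure_preserving (restrict_space M B') (restrict_space M B')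
      \<and> (\<integral>\<^sup>+x\<in>B'. of_nat (N x) \<partial>M) \<ge> emeasure M (\<Union>j::int. ipow (space M) g j ` B)"
proof -
  interpret prob_space M by fact
  interpret K: induced_map M g B N
    using g_mp g_bij g_inv_meas finite_measure_axioms B_meas N_meas N_pos return N_int
    by (intro induced_map.intro invertible_mps.intro induced_map_axioms.intro) auto
  have induced: "(\<lambda>x. (g ^^ N x) x) = K.induced" by (simp add: fun_eq_iff K.induced_def)
  show ?thesis unfolding induced
    using K.sets_kernel K.kernel_subset K.measure_kernel_pos[OF B_pos] K.induced_image_kernel
      K.bij_betw_induced_kernel K.measure_preserving_induced_kernel
      K.measure_preserving_inv_induced_kernel K.emeasure_le_if_subset_saturation[OF order_refl]
    by (intro exI[of _ K.kernel]) simp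
qed

end
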